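(* If $\bm{\Omega}$ is positive definite, then a normal mode transformation exists.
   Context: Fix an integer $N\ge 1$, real numbers $v$ with $|v|<1$, $L>0$, $L_{\star}\ge 0$, an integer $M\ge 1$ and real coefficients $c_{1}=1,c_{2},\dots,c_{M}$. Let $F(k)=\sum_{i=1}^{M}(-1)^{i-1}c_{i}L_{\star}^{2i-2}k^{2i-1}$ and $k_{n}=n\pi/L$, and assume $F(k_{n})^{2}\neq v^{2}k_{n}^{2}$ for $n=1,\dots,N$. Put $u_{n}=\sqrt{|F(k_{n})^{2}-v^{2}k_{n}^{2}|}/k_{n}>0$, and $\varepsilon_{n}=1$ if $F(k_{n})^{2}-v^{2}k_{n}^{2}>0$, $\varepsilon_{n}=0$ otherwise. Define $N\times N$ matrices $\bm\sigma,\bm\rho,\bm\xi$ by $\sigma_{nn}=0$, $\sigma_{nm}=\dfrac{2iv\sqrt{nm}\,[1-(-1)^{n+m}]}{\pi\sqrt{u_{n}u_{m}}\,(m^{2}-n^{2})}$ for $n\neq m$, $\bm\rho=\mathrm{diag}(n u_{n}\varepsilon_{n})$, $\bm\xi=\mathrm{diag}(-n u_{n}(1-\varepsilon_{n}))$. With $\mathbf{I}$ the $N\times N$ identity, define the $2N\times 2N$ matrices $\bm{\Sigma}=\begin{pmatrix}\mathbf{I}&\mathbf{0}\\ \mathbf{0}&-\mathbf{I}\end{pmatrix}$, $\bm{\Gamma}=\begin{pmatrix}\mathbf{0}&\mathbf{I}\\ \mathbf{I}&\mathbf{0}\end{pmatrix}$, $\mathbf{R}=\bm{\Sigma}-\begin{pmatrix}\bm\sigma&\bm\sigma\\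 \bm\sigma&\bm\sigma\end{pmatrix}$, $\bm{\Omega}=\begin{pmatrix}\bm\rho&\bm\xi\\ \bm\xi&\bm\rho\end{pmatrix}$. Standing assumption: $\mathbf{R}$ is invertible. Let $\mathbf{D}=\mathbf{R}^{-1}\bm{\Omega}$. Here ${}^{*}$ denotes entrywise complex conjugation and ${}^{\mathrm{H}}$ the conjugate transpose. A normal mode transformation is a $2N\times2N$ matrix $\mathbf{T}$ such that (i) $\mathbf{T}^{\mathrm{H}}\mathbf{R}\mathbf{T}=\bm{\Sigma}$; (ii) $\mathbf{T}=\bm{\Gamma}\mathbf{T}^{*}\bm{\Gamma}$; (iii) $\mathbf{T}^{-1}\mathbf{D}\mathbf{T}=\mathrm{diag}(\mu_{1},\dots,\mu_{N},-\mu_{1},\dots,-\mu_{N})$ for some real numbers $\mu_{n}>0$, where $\mathbf{T}^{-1}=\bm{\Sigma}\mathbf{T}^{\mathrm{H}}\mathbf{R}$. *)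

theory Defs
  imports Complex_Main "Jordan_Normal_Form.Matrix"
begin

text \<open>Indices: the paper's indices n,m = 1..N correspond to 0-based matrix
  indices i = n - 1, j = m - 1.  Block matrices are 2N x 2N.\<close>

definition Ffun :: "nat \<Rightarrow> (nat \<Rightarrow> real) \<Rightarrow> real \<Rightarrow> real \<Rightarrow> real" where
  "Ffun M c Ls k = (\<Sum>i = 1..M. (-1) ^ (i - 1) * c i * Ls ^ (2 * i - 2) * k ^ (2 * i - 1))"

definition kk :: "real \<Rightarrow> nat \<Rightarrow> real" where
  "kk L n = real n * pi / L"

definition disc :: "real \<Rightarrow> real \<Rightarrow> real \<Rightarrow> nat \<Rightarrow> (nat \<Rightarrow> real) \<Rightarrow> nat \<Rightarrow> real" where
  "disc v L Ls M c n = (Ffun M c Ls (kk L n))\<^sup>2 - v\<^sup>2 * (kk L n)\<^sup>2"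

definition uu :: "real \<Rightarrow> real \<Rightarrow> real \<Rightarrow> nat \<Rightarrow> (nat \<Rightarrow> real) \<Rightarrow> nat \<Rightarrow> real" where
  "uu v L Ls M c n = sqrt \<bar>disc v L Ls M c n\<bar> / kk L n"

definition epsn :: "real \<Rightarrow> real \<Rightarrow> real \<Rightarrow> nat \<Rightarrow> (nat \<Rightarrow> real) \<Rightarrow> nat \<Rightarrow> real" where
  "epsn v L Ls M c n = (if disc v L Ls M c n > 0 then 1 else 0)"

definition sigma_mat :: "nat \<Rightarrow> real \<Rightarrow> real \<Rightarrow> real \<Rightarrow> nat \<Rightarrow> (nat \<Rightarrow> real) \<Rightarrow> complex mat" where
  "sigma_mat N v L Ls M c = mat N N (\<lambda>(i, j).
     if i = j then 0 else
     (let n = i + 1; m = j + 1 in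
       (2 * \<i> * complex_of_real (v * sqrt (real (n * m)) * (1 - (-1) ^ (n + m))))
       / complex_of_real (pi * sqrt (uu v L Ls M c n * uu v L Ls M c m)
                          * (real (m ^ 2) - real (n ^ 2)))))"

definition rho_mat :: "nat \<Rightarrow> real \<Rightarrow> real \<Rightarrow> real \<Rightarrow> nat \<Rightarrow> (nat \<Rightarrow> real) \<Rightarrow> real mat" where
  "rho_mat N v L Ls M c = mat_diag N (\<lambda>i. real (i + 1) * uu v L Ls M c (i + 1) * epsn v L Ls M c (i + 1))"

definition xi_mat :: "nat \<Rightarrow> real \<Rightarrow> real \<Rightarrow> real \<Rightarrow> nat \<Rightarrow> (nat \<Rightarrow> real) \<Rightarrow> real mat" where
  "xi_mat N v L Ls M c = mat_diag N (\<lambda>i. - (real (i + 1) * uu v L Ls M c (i + 1) * (1 - epsn v L Ls M c (i + 1))))"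

definition Sigma_mat :: "nat \<Rightarrow> complex mat" where
  "Sigma_mat N = four_block_mat (1\<^sub>m N) (0\<^sub>m N N) (0\<^sub>m N N) (- 1\<^sub>m N)"

definition Gamma_mat :: "nat \<Rightarrow> complex mat" where
  "Gamma_mat N = four_block_mat (0\<^sub>m N N) (1\<^sub>m N) (1\<^sub>m N) (0\<^sub>m N N)"

definition R_mat :: "nat \<Rightarrow> real \<Rightarrow> real \<Rightarrow> real \<Rightarrow> nat \<Rightarrow> (nat \<Rightarrow> real) \<Rightarrow> complex mat" where
  "R_mat N v L Ls M c = (let s = sigma_mat N v L Ls M c in Sigma_mat N - four_block_mat s s s s)"

definition Omega_real :: "nat \<Rightarrow> real \<Rightarrow> real \<Rightarrow> real \<Rightarrow> nat \<Rightarrow> (nat \<Rightarrow> real) \<Rightarrow> real mat" where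
  "Omega_real N v L Ls M c =
     four_block_mat (rho_mat N v L Ls M c) (xi_mat N v L Ls M c) (xi_mat N v L Ls M c) (rho_mat N v L Ls M c)"

definition Omega_mat :: "nat \<Rightarrow> real \<Rightarrow> real \<Rightarrow> real \<Rightarrow> nat \<Rightarrow> (nat \<Rightarrow> real) \<Rightarrow> complex mat" where
  "Omega_mat N v L Ls M c = map_mat complex_of_real (Omega_real N v L Ls M c)"

definition pos_def_mat :: "real mat \<Rightarrow> bool" where
  "pos_def_mat A \<longleftrightarrow> square_mat A \<and> A = transpose_mat A \<and>
     (\<forall>x \<in> carrier_vec (dim_row A). x \<noteq> 0\<^sub>v (dim_row A) \<longrightarrow> x \<bullet> (A *\<^sub>v x) > 0)"

definition inv_mat :: "complex mat \<Rightarrow> complex mat" where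
  "inv_mat A = (SOME B. B \<in> carrier_mat (dim_row A) (dim_row A) \<and> A * B = 1\<^sub>m (dim_row A) \<and> B * A = 1\<^sub>m (dim_row A))"

definition D_mat :: "nat \<Rightarrow> real \<Rightarrow> real \<Rightarrow> real \<Rightarrow> nat \<Rightarrow> (nat \<Rightarrow> real) \<Rightarrow> complex mat" where
  "D_mat N v L Ls M c = inv_mat (R_mat N v L Ls M c) * Omega_mat N v L Ls M c"

definition conj_mat :: "complex mat \<Rightarrow> complex mat" where
  "conj_mat A = map_mat cnj A"

definition adj_mat :: "complex mat \<Rightarrow> complex mat" where
  "adj_mat A = transpose_mat (map_mat cnj A)"

definition normal_mode_transformation ::
  "nat \<Rightarrow> real \<Rightarrow> real \<Rightarrow> real \<Rightarrow> nat \<Rightarrow> (nat \<Rightarrow> real) \<Rightarrow> complex mat \<Rightarrow> bool" where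
  "normal_mode_transformation N v L Ls M c T \<longleftrightarrow>
     T \<in> carrier_mat (2 * N) (2 * N) \<and>
     adj_mat T * R_mat N v L Ls M c * T = Sigma_mat N \<and>
     T = Gamma_mat N * conj_mat T * Gamma_mat N \<and>
     (\<exists>\<mu> :: nat \<Rightarrow> real. (\<forall>i < N. \<mu> i > 0) \<and>
        (Sigma_mat N * adj_mat T * R_mat N v L Ls M c) * D_mat N v L Ls M c * T
          = mat_diag (2 * N) (\<lambda>j. if j < N then complex_of_real (\<mu> j)
                                  else complex_of_real (- \<mu> (j - N))))"

end

theory Submission
  imports Defs "Jordan_Normal_Form.Spectral_Radius"
begin

(* Positive definiteness of Omega forces every epsilon_n = 1, hence xi = 0 and Omega = diag(w, w)
   with w > 0.  Scaling by Omega^(-1/2) reduces the problem to the Hermitian matrix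
   K = Omega^(-1/2) R Omega^(-1/2), which is invertible and satisfies Gamma K^* Gamma = -K: the map
   u |-> Gamma u^* sends eigenvectors of eigenvalue d to eigenvectors of eigenvalue -d.  The squared
   overlaps between an orthonormal eigenbasis of K and its image under this map form a doubly
   stochastic matrix vanishing between eigenvalues of equal sign, so exactly N eigenvalues are
   positive.  If u_1, ..., u_N are orthonormal eigenvectors for the positive eigenvalues d_j, the
   columns Omega^(-1/2) u_j / sqrt d_j and Omega^(-1/2) Gamma u_j^* / sqrt d_j form T, with
   mu_j = 1 / d_j. *)

(* An n x n matrix is handled as its entry function; entries with an index \<ge> n are irrelevant. *)
definition hermitian_on :: "nat \<Rightarrow> (nat \<Rightarrow> nat \<Rightarrow> complex) \<Rightarrow> bool" where
  "hermitian_on n A \<longleftrightarrow> (\<forall>i<n. \<forall>j<n. cnj (A i j) = A j i)"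

definition mat_involution :: "nat \<Rightarrow> (nat \<Rightarrow> nat \<Rightarrow> complex) \<Rightarrow> bool" where
  "mat_involution n H \<longleftrightarrow> (\<forall>i<n. \<forall>j<n. (\<Sum>k<n. H i k * H k j) = (if i = j then 1 else 0))"

definition orthonormal_cols :: "nat \<Rightarrow> (nat \<Rightarrow> nat \<Rightarrow> complex) \<Rightarrow> bool" where
  "orthonormal_cols n U \<longleftrightarrow> (\<forall>i<n. \<forall>j<n. (\<Sum>k<n. cnj (U k i) * U k j) = (if i = j then 1 else 0))"

definition eigenbasis ::
  "nat \<Rightarrow> (nat \<Rightarrow> nat \<Rightarrow> complex) \<Rightarrow> (nat \<Rightarrow> nat \<Rightarrow> complex) \<Rightarrow> (nat \<Rightarrow> real) \<Rightarrow> bool" where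
  "eigenbasis n A U d \<longleftrightarrow> orthonormal_cols n U \<and>
     (\<forall>i<n. \<forall>j<n. (\<Sum>k<n. A i k * U k j) = of_real (d j) * U i j)"

lemma sum_kronecker_left:
  "i < (n::nat) \<Longrightarrow> (\<Sum>k<n. (if i = k then 1 else 0) * f k) = (f i :: 'a :: semiring_1)"
  by (simp add: if_distrib[of "\<lambda>x. x * _"] cong: if_cong)

lemma sum_kronecker_right:
  "j < (n::nat) \<Longrightarrow> (\<Sum>k<n. f k * (if k = j then 1 else 0)) = (f j :: 'a :: semiring_1)"
  by (simp add: if_distrib cong: if_cong)

lemma sum_mult_sum_assoc:
  fixes x :: "nat \<Rightarrow> 'a :: semiring_0"
  shows "(\<Sum>k<n. x k * (\<Sum>p<m. y k p * z p)) = (\<Sum>p<m. (\<Sum>k<n. x k * y k p) * z p)"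
proof -
  have "(\<Sum>k<n. x k * (\<Sum>p<m. y k p * z p)) = (\<Sum>k<n. \<Sum>p<m. x k * y k p * z p)"
    by (simp add: sum_distrib_left mult.assoc)
  also have "\<dots> = (\<Sum>p<m. \<Sum>k<n. x k * y k p * z p)" by (rule sum.swap)
  also have "\<dots> = (\<Sum>p<m. (\<Sum>k<n. x k * y k p) * z p)" by (simp add: sum_distrib_right)
  finally show ?thesis .
qed

lemma cnj_mult_self: "cnj z * z = of_real ((cmod z)\<^sup>2)"
  by (metis complex_norm_square mult.commute)

lemma sum_cnj_mult_self_eq_0D:
  fixes w :: "nat \<Rightarrow> complex"
  assumes "(\<Sum>k<n. cnj (w k) * w k) = 0" "i < n"
  shows "w i = 0"
proof -
  have "of_real (\<Sum>k<n. (cmod (w k))\<^sup>2) = (0::complex)"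
    using assms(1) unfolding cnj_mult_self of_real_sum .
  then have "(\<Sum>k<n. (cmod (w k))\<^sup>2) = 0" by (simp only: of_real_eq_0_iff)
  then have "\<forall>k\<in>{..<n}. (cmod (w k))\<^sup>2 = 0"
    by (subst sum_nonneg_eq_0_iff[symmetric]) auto
  then show ?thesis using assms(2) by auto
qed

lemma householder_mat_involution:
  fixes a b :: "nat \<Rightarrow> complex"
  assumes "(\<Sum>k<n. b k * a k) = 2"
  shows "mat_involution n (\<lambda>i j. (if i = j then 1 else 0) - a i * b j)"
  unfolding mat_involution_def
proof (intro allI impI)
  fix i j assume ij: "i < n" "j < n"
  have "((if i = k then 1 else 0) - a i * b k) * ((if k = j then 1 else 0) - a k * b j)
     = (if i = k then 1 else 0) * (if k = j then 1 else 0) - (if i = k then 1 else 0) * (a k * b j)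
       - a i * (b k * (if k = j then 1 else 0)) + (a i * b j) * (b k * a k)" for k
    by (auto simp: algebra_simps)
  then show "(\<Sum>k<n. ((if i = k then 1 else 0) - a i * b k) * ((if k = j then 1 else 0) - a k * b j))
     = (if i = j then 1 else 0)"
    using ij assms
    by (simp add: sum_subtractf sum.distrib sum_kronecker_left sum_distrib_left[symmetric]
        sum_kronecker_right)
qed

lemma householder_reflection_exists:
  fixes e :: "nat \<Rightarrow> complex"
  assumes n: "0 < n" and e1: "(\<Sum>k<n. cnj (e k) * e k) = 1"
  obtains H \<theta> where "hermitian_on n H" "mat_involution n H"
    "\<forall>i<n. (\<Sum>k<n. H i k * e k) = (if i = 0 then \<theta> else 0)" "cnj \<theta> * \<theta> = 1"
proof -
  \<comment> \<open>The phase \<open>\<theta>\<close> of \<open>e 0\<close> makes \<open>\<langle>w, e\<rangle>\<close> real for \<open>w = \<theta> \<delta>\<^sub>0 - e\<close>,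
    so the reflection \<open>I - 2 w w\<^sup>* / \<parallel>w\<parallel>\<^sup>2\<close> sends \<open>e\<close> to \<open>\<theta> \<delta>\<^sub>0\<close>.\<close>
  define \<theta> where "\<theta> = (if e 0 = 0 then 1 else e 0 / of_real (cmod (e 0)))"
  have \<theta>_unit: "cnj \<theta> * \<theta> = 1" and \<theta>_phase: "cnj \<theta> * e 0 = of_real (cmod (e 0))"
    unfolding \<theta>_def
    by (auto simp: complex_cnj_divide cnj_mult_self power2_eq_square norm_divide
        mult.commute[of "cnj (e 0)"])
  have \<theta>_phase': "\<theta> * cnj (e 0) = of_real (cmod (e 0))"
    using arg_cong[OF \<theta>_phase, of cnj] by (simp add: mult.commute)
  define w where "w k = (if k = 0 then \<theta> else 0) - e k" for k
  define c where "c = (\<Sum>k<n. cnj (w k) * w k)"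
  have c_real: "cnj c = c" unfolding c_def by (simp add: mult.commute)
  have "cnj (w k) * e k = (if k = 0 then cnj \<theta> * e 0 else 0) - cnj (e k) * e k" for k
    unfolding w_def by (simp add: algebra_simps)
  then have we: "(\<Sum>k<n. cnj (w k) * e k) = cnj \<theta> * e 0 - 1"
    using n e1 by (simp add: sum_subtractf)
  have c_val: "c = 2 - 2 * of_real (cmod (e 0))"
  proof -
    have "cnj (w k) * w k = (if k = 0 then cnj (w 0) * \<theta> else 0) - cnj (w k) * e k" for k
      unfolding w_def by (simp add: algebra_simps)
    then have "c = cnj (w 0) * \<theta> - (\<Sum>k<n. cnj (w k) * e k)"
      using n unfolding c_def by (simp add: sum_subtractf)
    also have "cnj (w 0) * \<theta> = cnj \<theta> * \<theta> - \<theta> * cnj (e 0)"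
      unfolding w_def by (simp add: algebra_simps)
    finally show ?thesis using we \<theta>_unit \<theta>_phase \<theta>_phase' by simp
  qed
  show ?thesis
  proof (cases "c = 0")
    case True
    have "w i = 0" if "i < n" for i
      using sum_cnj_mult_self_eq_0D[of w n i] True that unfolding c_def by simp
    then have "e i = (if i = 0 then \<theta> else 0)" if "i < n" for i using that unfolding w_def by simp
    then show ?thesis
      using \<theta>_unit by (intro that[of "\<lambda>i j. if i = j then 1 else 0" \<theta>])
        (auto simp: hermitian_on_def mat_involution_def sum_kronecker_left)
  next
    case False
    define a where "a i = 2 * w i / c" for i
    define H where "H i j = (if i = j then 1 else 0) - a i * cnj (w j)" for i j
    have ab: "(\<Sum>k<n. cnj (w k) * a k) = 2"
    proof -
      have "(\<Sum>k<n. cnj (w k) * a k) = 2 * c / c" unfolding a_def c_def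
        by (simp add: sum_divide_distrib sum_distrib_left algebra_simps)
      then show ?thesis using False by simp
    qed
    have "hermitian_on n H"
      unfolding hermitian_on_def H_def a_def using c_real
      by (simp add: mult.commute complex_cnj_divide)
    moreover have "mat_involution n H"
      unfolding H_def by (rule householder_mat_involution[OF ab])
    moreover have "(\<Sum>k<n. H i k * e k) = (if i = 0 then \<theta> else 0)" if "i < n" for i
    proof -
      have "(\<Sum>k<n. H i k * e k)
          = (\<Sum>k<n. (if i = k then 1 else 0) * e k) - a i * (\<Sum>k<n. cnj (w k) * e k)"
        unfolding H_def by (simp add: left_diff_distrib sum_subtractf sum_distrib_left mult.assoc)
      also have "(\<Sum>k<n. (if i = k then 1 else 0) * e k) = e i" by (rule sum_kronecker_left[OF that])
      also have "a i * (\<Sum>k<n. cnj (w k) * e k) = - w i"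
        unfolding we a_def \<theta>_phase c_val using False c_val by (simp add: field_simps)
      finally show ?thesis unfolding w_def by simp
    qed
    ultimately show ?thesis using \<theta>_unit that by blast
  qed
qed

lemma exists_unit_eigenvector:
  fixes A :: "nat \<Rightarrow> nat \<Rightarrow> complex"
  assumes "0 < m"
  obtains a e where "\<forall>i<m. (\<Sum>k<m. A i k * e k) = a * e i" "(\<Sum>k<m. cnj (e k) * e k) = 1"
proof -
  define AM where "AM = mat m m (\<lambda>(i, j). A i j)"
  have AM: "AM \<in> carrier_mat m m" unfolding AM_def by simp
  obtain a where "eigenvalue AM a"
    using spectrum_non_empty[OF AM assms] unfolding spectrum_def by blast
  then obtain v where "eigenvector AM v a" unfolding eigenvalue_def by blast
  then have v: "v \<in> carrier_vec m" and v0: "v \<noteq> 0\<^sub>v m" and Av: "AM *\<^sub>v v = a \<cdot>\<^sub>v v"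
    unfolding eigenvector_def using AM by auto
  define r where "r = (\<Sum>k<m. (cmod (v $ k))\<^sup>2)"
  have "r \<noteq> 0"
  proof
    assume "r = 0"
    then have "v $ i = 0" if "i < m" for i
      using that unfolding r_def by (subst (asm) sum_nonneg_eq_0_iff) auto
    then have "v = 0\<^sub>v m" using v by (intro eq_vecI) auto
    then show False using v0 by simp
  qed
  then have r: "r > 0" unfolding r_def by (simp add: order_le_neq_trans sum_nonneg)
  define e where "e k = v $ k / of_real (sqrt r)" for k
  show ?thesis
  proof
    show "\<forall>i<m. (\<Sum>k<m. A i k * e k) = a * e i"
    proof (intro allI impI)
      fix i assume i: "i < m"
      have "(\<Sum>k<m. A i k * v $ k) = a * v $ i"
        using arg_cong[OF Av, of "\<lambda>x. x $ i"] i v unfolding AM_def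
        by (simp add: scalar_prod_def atLeast0LessThan)
      then show "(\<Sum>k<m. A i k * e k) = a * e i"
        unfolding e_def by (simp add: sum_divide_distrib[symmetric])
    qed
    have "of_real (sqrt r) * of_real (sqrt r) = (of_real r :: complex)"
      using r by (simp flip: of_real_mult)
    then have "cnj (e k) * e k = cnj (v $ k) * v $ k / of_real r" for k
      unfolding e_def by (simp add: complex_cnj_divide)
    then have "(\<Sum>k<m. cnj (e k) * e k) = (\<Sum>k<m. cnj (v $ k) * v $ k) / of_real r"
      by (simp only: sum_divide_distrib)
    also have "(\<Sum>k<m. cnj (v $ k) * v $ k) = of_real r"
      unfolding r_def cnj_mult_self of_real_sum ..
    finally show "(\<Sum>k<m. cnj (e k) * e k) = 1" using r by simp
  qed
qed

lemma hermitian_on_sandwich: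
  assumes "hermitian_on m A" "hermitian_on m H"
  shows "hermitian_on m (\<lambda>i j. \<Sum>k<m. H i k * (\<Sum>l<m. A k l * H l j))"
  unfolding hermitian_on_def
proof (intro allI impI)
  fix i j assume ij: "i < m" "j < m"
  have "cnj (\<Sum>k<m. H i k * (\<Sum>l<m. A k l * H l j)) = (\<Sum>k<m. \<Sum>l<m. H k i * A l k * H j l)"
    using assms ij by (simp add: hermitian_on_def sum_distrib_left mult.assoc)
  also have "\<dots> = (\<Sum>l<m. \<Sum>k<m. H k i * A l k * H j l)" by (rule sum.swap)
  also have "\<dots> = (\<Sum>k<m. H j k * (\<Sum>l<m. A k l * H l i))"
    by (simp add: sum_distrib_left ac_simps)
  finally show "cnj (\<Sum>k<m. H i k * (\<Sum>l<m. A k l * H l j)) = (\<Sum>k<m. H j k * (\<Sum>l<m. A k l * H l i))" .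
qed

lemma hermitian_deflation:
  assumes herm: "hermitian_on m A" and m: "0 < m"
  obtains H a where "hermitian_on m H" "mat_involution m H"
    "\<forall>i<m. (\<Sum>k<m. H i k * (\<Sum>l<m. A k l * H l 0)) = (if i = 0 then of_real a else 0)"
proof -
  obtain \<alpha> e where e_eig: "\<forall>i<m. (\<Sum>k<m. A i k * e k) = \<alpha> * e i"
    and e_unit: "(\<Sum>k<m. cnj (e k) * e k) = 1"
    using exists_unit_eigenvector[OF m] by blast
  obtain H \<theta> where H_herm: "hermitian_on m H" and H_inv: "mat_involution m H"
    and He: "\<forall>i<m. (\<Sum>k<m. H i k * e k) = (if i = 0 then \<theta> else 0)" and \<theta>: "cnj \<theta> * \<theta> = 1"
    using householder_reflection_exists[OF m e_unit] by blast
  have H0: "H i 0 = e i * cnj \<theta>" if i: "i < m" for i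
  proof -
    have "(\<Sum>k<m. H i k * (\<Sum>l<m. H k l * e l)) = e i"
      using H_inv i by (simp add: sum_mult_sum_assoc mat_involution_def sum_kronecker_left)
    moreover have "(\<Sum>k<m. H i k * (\<Sum>l<m. H k l * e l)) = (\<Sum>k<m. H i k * (if k = 0 then \<theta> else 0))"
      using He by (intro sum.cong) auto
    moreover have "\<dots> = H i 0 * \<theta>" using m by (simp add: if_distrib sum.delta cong: if_cong)
    ultimately have H0\<theta>: "H i 0 * \<theta> = e i" by simp
    have "H i 0 = H i 0 * (cnj \<theta> * \<theta>)" using \<theta> by simp
    also have "\<dots> = (H i 0 * \<theta>) * cnj \<theta>" by (simp only: ac_simps)
    finally show ?thesis unfolding H0\<theta> .
  qed
  define B where "B i j = (\<Sum>k<m. H i k * (\<Sum>l<m. A k l * H l j))" for i j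
  have B0: "B i 0 = (if i = 0 then \<alpha> else 0)" if i: "i < m" for i
  proof -
    have "(\<Sum>l<m. A k l * H l 0) = \<alpha> * e k * cnj \<theta>" if "k < m" for k
    proof -
      have "(\<Sum>l<m. A k l * H l 0) = (\<Sum>l<m. A k l * e l) * cnj \<theta>"
        using H0 by (simp add: sum_distrib_right mult.assoc)
      then show ?thesis using e_eig that by simp
    qed
    then have "B i 0 = (\<Sum>k<m. H i k * e k) * (\<alpha> * cnj \<theta>)"
      unfolding B_def sum_distrib_right by (intro sum.cong) (auto simp: ac_simps)
    then show ?thesis using He i \<theta> by (simp add: ac_simps)
  qed
  have "hermitian_on m B" unfolding B_def by (rule hermitian_on_sandwich[OF herm H_herm])
  then have "cnj (B 0 0) = B 0 0" using m unfolding hermitian_on_def by blast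
  then have "of_real (Re \<alpha>) = \<alpha>" using B0[OF m] by (simp add: complex_eq_iff)
  then show ?thesis using that[OF H_herm H_inv, of "Re \<alpha>"] B0 unfolding B_def by simp
qed

lemma eigenbasis_sandwich:
  assumes H_herm: "hermitian_on m H" and H_inv: "mat_involution m H"
    and F: "eigenbasis m (\<lambda>i j. \<Sum>k<m. H i k * (\<Sum>l<m. A k l * H l j)) F d"
  shows "eigenbasis m A (\<lambda>i j. \<Sum>k<m. H i k * F k j) d"
proof -
  have HH: "(\<Sum>k<m. H p k * (\<Sum>q<m. H k q * X q)) = X p" if "p < m" for p and X :: "nat \<Rightarrow> complex"
    using H_inv that by (simp add: sum_mult_sum_assoc mat_involution_def sum_kronecker_left)
  have "(\<Sum>k<m. cnj (\<Sum>p<m. H k p * F p i) * (\<Sum>q<m. H k q * F q j)) = (if i = j then 1 else 0)"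
    if ij: "i < m" "j < m" for i j
  proof -
    have "(\<Sum>k<m. cnj (\<Sum>p<m. H k p * F p i) * (\<Sum>q<m. H k q * F q j))
        = (\<Sum>k<m. (\<Sum>p<m. cnj (F p i) * H p k) * (\<Sum>q<m. H k q * F q j))"
      using H_herm by (intro sum.cong refl) (simp add: hermitian_on_def mult.commute)
    also have "\<dots> = (\<Sum>p<m. cnj (F p i) * (\<Sum>k<m. H p k * (\<Sum>q<m. H k q * F q j)))"
      by (rule sum_mult_sum_assoc[symmetric])
    also have "\<dots> = (\<Sum>p<m. cnj (F p i) * F p j)" using HH by simp
    finally show ?thesis using F ij unfolding eigenbasis_def orthonormal_cols_def by simp
  qed
  moreover have "(\<Sum>k<m. A i k * (\<Sum>p<m. H k p * F p j)) = of_real (d j) * (\<Sum>p<m. H i p * F p j)"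
    if ij: "i < m" "j < m" for i j
  proof -
    have "(\<Sum>k<m. A i k * (\<Sum>p<m. H k p * F p j))
        = (\<Sum>k<m. H i k * (\<Sum>q<m. (\<Sum>k'<m. H k k' * (\<Sum>l<m. A k' l * H l q)) * F q j))"
      using HH[OF ij(1)] by (simp add: sum_mult_sum_assoc)
    also have "\<dots> = (\<Sum>k<m. H i k * (of_real (d j) * F k j))"
      using F ij by (intro sum.cong refl) (simp add: eigenbasis_def sum_mult_sum_assoc[symmetric])
    finally show ?thesis by (simp add: sum_distrib_left ac_simps)
  qed
  ultimately show ?thesis unfolding eigenbasis_def orthonormal_cols_def by blast
qed

lemma eigenbasis_block_extend:
  assumes col0: "\<forall>i<Suc n. B i 0 = (if i = 0 then of_real a else 0)"
    and row0: "\<forall>j<Suc n. B 0 j = (if j = 0 then of_real a else 0)"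
    and U: "eigenbasis n (\<lambda>i j. B (Suc i) (Suc j)) U d"
  shows "eigenbasis (Suc n) B
    (\<lambda>k j. if k = 0 then (if j = 0 then 1 else 0) else if j = 0 then 0 else U (k - 1) (j - 1))
    (\<lambda>j. if j = 0 then a else d (j - 1))"
    (is "eigenbasis _ _ ?F ?d")
proof -
  have "(\<Sum>k<Suc n. cnj (?F k i) * ?F k j) = (if i = j then 1 else 0)"
    if "i < Suc n" "j < Suc n" for i j
    using U that unfolding sum.lessThan_Suc_shift eigenbasis_def orthonormal_cols_def
    by (cases i; cases j) auto
  moreover have "(\<Sum>p<Suc n. B k p * ?F p j) = of_real (?d j) * ?F k j"
    if k: "k < Suc n" and j: "j < Suc n" for k j
  proof (cases j)
    case 0
    then show ?thesis using col0 k unfolding sum.lessThan_Suc_shift by simp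
  next
    case (Suc j')
    then show ?thesis
    proof (cases k)
      case 0
      then show ?thesis using row0 Suc unfolding sum.lessThan_Suc_shift by simp
    next
      case (Suc k')
      then show ?thesis using U k j \<open>j = Suc j'\<close> col0
        unfolding sum.lessThan_Suc_shift eigenbasis_def by simp
    qed
  qed
  ultimately show ?thesis unfolding eigenbasis_def orthonormal_cols_def by blast
qed

theorem hermitian_eigenbasis_exists:
  assumes "hermitian_on n A"
  shows "\<exists>U d. eigenbasis n A U d"
  using assms
proof (induction n arbitrary: A)
  case 0
  then show ?case by (simp add: eigenbasis_def orthonormal_cols_def)
next
  case (Suc n)
  obtain H a where H_herm: "hermitian_on (Suc n) H" and H_inv: "mat_involution (Suc n) H"
    and HAH: "\<forall>i<Suc n. (\<Sum>k<Suc n. H i k * (\<Sum>l<Suc n. A k l * H l 0))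
        = (if i = 0 then of_real a else 0)"
    using hermitian_deflation[OF Suc.prems] by blast
  define B where "B i j = (\<Sum>k<Suc n. H i k * (\<Sum>l<Suc n. A k l * H l j))" for i j
  have col0: "\<forall>i<Suc n. B i 0 = (if i = 0 then of_real a else 0)"
    using HAH unfolding B_def .
  have B_herm: "hermitian_on (Suc n) B"
    unfolding B_def by (rule hermitian_on_sandwich[OF Suc.prems H_herm])
  have row0: "\<forall>j<Suc n. B 0 j = (if j = 0 then of_real a else 0)"
  proof (intro allI impI)
    fix j assume j: "j < Suc n"
    then have "B 0 j = cnj (B j 0)" using B_herm unfolding hermitian_on_def by simp
    then show "B 0 j = (if j = 0 then of_real a else 0)" using col0 j by simp
  qed
  have "hermitian_on n (\<lambda>i j. B (Suc i) (Suc j))"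
    using B_herm unfolding hermitian_on_def by simp
  then obtain U d where "eigenbasis n (\<lambda>i j. B (Suc i) (Suc j)) U d" using Suc.IH by blast
  from eigenbasis_block_extend[OF col0 row0 this]
  show ?case unfolding B_def by (blast intro: eigenbasis_sandwich[OF H_herm H_inv])
qed

definition index_involution :: "nat \<Rightarrow> (nat \<Rightarrow> nat) \<Rightarrow> bool" where
  "index_involution n g \<longleftrightarrow> (\<forall>i<n. g i < n \<and> g (g i) = i)"

definition swap_antisymmetric :: "nat \<Rightarrow> (nat \<Rightarrow> nat) \<Rightarrow> (nat \<Rightarrow> nat \<Rightarrow> complex) \<Rightarrow> bool" where
  "swap_antisymmetric n g K \<longleftrightarrow> (\<forall>i<n. \<forall>j<n. cnj (K (g i) (g j)) = - K i j)"

lemma sum_reindex_involution: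
  assumes "index_involution n g"
  shows "(\<Sum>k<n. f (g k)) = (\<Sum>k<n. f k)"
proof -
  have "bij_betw g {..<n} {..<n}"
    using assms unfolding index_involution_def by (intro bij_betw_byWitness[of _ g]) auto
  then show ?thesis by (rule sum.reindex_bij_betw)
qed

lemma eigenvectors_orthogonal:
  fixes K :: "nat \<Rightarrow> nat \<Rightarrow> complex"
  assumes "hermitian_on n K"
    and x: "\<And>i. i < n \<Longrightarrow> (\<Sum>l<n. K i l * x l) = of_real \<alpha> * x i"
    and y: "\<And>i. i < n \<Longrightarrow> (\<Sum>l<n. K i l * y l) = of_real \<beta> * y i"
    and "\<alpha> \<noteq> \<beta>"
  shows "(\<Sum>k<n. cnj (x k) * y k) = 0"
proof -
  have "(\<Sum>i<n. cnj (x i) * K i l) = of_real \<alpha> * cnj (x l)" if "l < n" for l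
  proof -
    have "(\<Sum>i<n. cnj (x i) * K i l) = cnj (\<Sum>i<n. K l i * x i)"
      using assms(1) that by (simp add: hermitian_on_def mult.commute)
    then show ?thesis using x that by simp
  qed
  then have "(\<Sum>i<n. cnj (x i) * (\<Sum>l<n. K i l * y l)) = (\<Sum>l<n. (of_real \<alpha> * cnj (x l)) * y l)"
    unfolding sum_mult_sum_assoc by (intro sum.cong) auto
  then have "(\<Sum>i<n. cnj (x i) * (\<Sum>l<n. K i l * y l)) = of_real \<alpha> * (\<Sum>k<n. cnj (x k) * y k)"
    by (simp add: sum_distrib_left mult.assoc)
  moreover have "(\<Sum>i<n. cnj (x i) * (\<Sum>l<n. K i l * y l)) = of_real \<beta> * (\<Sum>k<n. cnj (x k) * y k)"
    using y by (simp add: sum_distrib_left algebra_simps)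
  ultimately have "(of_real \<alpha> - of_real \<beta>) * (\<Sum>k<n. cnj (x k) * y k) = 0"
    by (simp add: algebra_simps)
  then show ?thesis using assms(4) by simp
qed

lemma orthonormal_cols_rows:
  assumes "orthonormal_cols n U" "i < n" "j < n"
  shows "(\<Sum>k<n. U i k * cnj (U j k)) = (if i = j then 1 else 0)"
proof -
  define UM where "UM = mat n n (\<lambda>(i, j). U i j)"
  define UH where "UH = mat n n (\<lambda>(i, j). cnj (U j i))"
  have UM: "UM \<in> carrier_mat n n" and UH: "UH \<in> carrier_mat n n" unfolding UM_def UH_def by auto
  have "UH * UM = 1\<^sub>m n"
    using assms(1) unfolding UM_def UH_def orthonormal_cols_def
    by (intro eq_matI) (auto simp: scalar_prod_def atLeast0LessThan)
  then have "UM * UH = 1\<^sub>m n" using mat_mult_left_right_inverse[OF UH UM] by simp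
  then have "(UM * UH) $$ (i, j) = 1\<^sub>m n $$ (i, j)" by simp
  then show ?thesis
    using assms(2,3) unfolding UM_def UH_def by (simp add: scalar_prod_def atLeast0LessThan)
qed

lemma parseval:
  assumes "orthonormal_cols n U"
  shows "(\<Sum>k<n. cnj (\<Sum>i<n. cnj (U i k) * y i) * (\<Sum>i<n. cnj (U i k) * y i))
    = (\<Sum>i<n. cnj (y i) * y i)"
proof -
  have "(\<Sum>k<n. cnj (\<Sum>i<n. cnj (U i k) * y i) * (\<Sum>i<n. cnj (U i k) * y i))
      = (\<Sum>k<n. (\<Sum>i<n. cnj (y i) * U i k) * (\<Sum>i'<n. cnj (U i' k) * y i'))"
    by (simp add: mult.commute)
  also have "\<dots> = (\<Sum>i<n. cnj (y i) * (\<Sum>k<n. U i k * (\<Sum>i'<n. cnj (U i' k) * y i')))"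
    by (rule sum_mult_sum_assoc[symmetric])
  also have "\<dots> = (\<Sum>i<n. cnj (y i) * y i)"
  proof (rule sum.cong[OF refl])
    fix i assume "i \<in> {..<n}"
    then have "(\<Sum>k<n. U i k * (\<Sum>i'<n. cnj (U i' k) * y i')) = y i"
      using orthonormal_cols_rows[OF assms]
      by (simp add: sum_mult_sum_assoc sum_kronecker_left)
    then show "cnj (y i) * (\<Sum>k<n. U i k * (\<Sum>i'<n. cnj (U i' k) * y i')) = cnj (y i) * y i" by simp
  qed
  finally show ?thesis .
qed

lemma reflected_eigenbasis:
  assumes g: "index_involution n g"
    and K: "swap_antisymmetric n g K"
    and U: "eigenbasis n K U d"
  shows "eigenbasis n K (\<lambda>k j. cnj (U (g k) j)) (\<lambda>j. - d j)"
proof -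
  have "(\<Sum>k<n. cnj (cnj (U (g k) i)) * cnj (U (g k) j)) = (if i = j then 1 else 0)"
    if "i < n" "j < n" for i j
  proof -
    have "(\<Sum>k<n. cnj (cnj (U (g k) i)) * cnj (U (g k) j)) = cnj (\<Sum>k<n. cnj (U k i) * U k j)"
      using sum_reindex_involution[OF g, of "\<lambda>k. U k i * cnj (U k j)"] by (simp add: mult.commute)
    then show ?thesis using U that unfolding eigenbasis_def orthonormal_cols_def by simp
  qed
  moreover have "(\<Sum>l<n. K i l * cnj (U (g l) j)) = of_real (- d j) * cnj (U (g i) j)"
    if i: "i < n" and j: "j < n" for i j
  proof -
    have "(\<Sum>l<n. K i l * cnj (U (g l) j)) = - cnj (\<Sum>l<n. K (g i) (g l) * U (g l) j)"
      using K g i unfolding swap_antisymmetric_def index_involution_def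
      by (simp add: sum_negf[symmetric])
    also have "(\<Sum>l<n. K (g i) (g l) * U (g l) j) = (\<Sum>l<n. K (g i) l * U l j)"
      by (rule sum_reindex_involution[OF g])
    finally show ?thesis using U g i j unfolding eigenbasis_def index_involution_def by simp
  qed
  ultimately show ?thesis unfolding eigenbasis_def orthonormal_cols_def by blast
qed

lemma card_pos_eigenvalues_eq_card_neg:
  assumes g: "index_involution n g"
    and K_herm: "hermitian_on n K"
    and K_anti: "swap_antisymmetric n g K"
    and U: "eigenbasis n K U d"
  shows "card {j. j < n \<and> d j > 0} = card {j. j < n \<and> d j < 0}"
proof -
  \<comment> \<open>The squared overlaps of the eigenbasis with its reflection form a doubly stochastic
    matrix which vanishes between eigenvalues of equal sign.\<close>
  define V where "V k j = cnj (U (g k) j)" for k j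
  have V: "eigenbasis n K V (\<lambda>j. - d j)"
    unfolding V_def by (rule reflected_eigenbasis[OF g K_anti U])
  define G where "G k j = (\<Sum>i<n. cnj (U i k) * V i j)" for k j
  define h where "h k j = cnj (G k j) * G k j" for k j
  have G_sym: "G k j = G j k" for k j
  proof -
    have "G k j = (\<Sum>i<n. cnj (U (g i) k) * cnj (U (g (g i)) j))"
      unfolding G_def V_def by (rule sum_reindex_involution[OF g, symmetric])
    also have "\<dots> = (\<Sum>i<n. cnj (U (g i) k) * cnj (U i j))"
      using g unfolding index_involution_def by (intro sum.cong) auto
    finally show ?thesis unfolding G_def V_def by (simp add: mult.commute)
  qed
  have h0: "h k j = 0" if "k < n" "j < n" "d k \<noteq> - d j" for k j
    using eigenvectors_orthogonal[OF K_herm _ _ that(3), of "\<lambda>l. U l k" "\<lambda>l. V l j"] U V that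
    unfolding h_def G_def eigenbasis_def by simp
  have col: "(\<Sum>k<n. h k j) = 1" if "j < n" for j
    using parseval[of n U "\<lambda>i. V i j"] U V that
    unfolding h_def G_def eigenbasis_def orthonormal_cols_def by simp
  have row: "(\<Sum>j<n. h k j) = 1" if "k < n" for k
    using col[OF that] unfolding h_def G_sym[of k] by simp
  define P where "P = {j. j < n \<and> d j > 0}"
  define Q where "Q = {j. j < n \<and> d j < 0}"
  have "of_nat (card P) = (\<Sum>j\<in>P. \<Sum>k<n. h k j)"
    using col unfolding P_def by simp
  also have "\<dots> = (\<Sum>j\<in>P. \<Sum>k\<in>Q. h k j)"
    by (rule sum.cong[OF refl], rule sum.mono_neutral_right) (auto simp: P_def Q_def intro!: h0)
  also have "\<dots> = (\<Sum>k\<in>Q. \<Sum>j\<in>P. h k j)" by (rule sum.swap)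
  also have "\<dots> = (\<Sum>k\<in>Q. \<Sum>j<n. h k j)"
    by (rule sum.cong[OF refl], rule sum.mono_neutral_left) (auto simp: P_def Q_def intro!: h0)
  also have "\<dots> = of_nat (card Q)"
    using row unfolding Q_def by simp
  finally show ?thesis unfolding P_def Q_def by (simp only: of_nat_eq_iff)
qed

definition block_swap :: "nat \<Rightarrow> nat \<Rightarrow> nat" where
  "block_swap N i = (if i < N then i + N else i - N)"

lemma index_involution_block_swap: "index_involution (2 * N) (block_swap N)"
  unfolding index_involution_def block_swap_def by auto

lemma block_swap_basics:
  assumes "i < 2 * N"
  shows block_swap_less: "block_swap N i < 2 * N"
    and block_swap_less_iff: "block_swap N i < N \<longleftrightarrow> \<not> i < N"
    and block_index_block_swap:
      "(if block_swap N i < N then block_swap N i else block_swap N i - N)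
        = (if i < N then i else i - N)"
  using assms unfolding block_swap_def by auto

definition trivial_kernel :: "nat \<Rightarrow> (nat \<Rightarrow> nat \<Rightarrow> 'a :: semiring_0) \<Rightarrow> bool" where
  "trivial_kernel n A \<longleftrightarrow> (\<forall>x. (\<forall>i<n. (\<Sum>l<n. A i l * x l) = 0) \<longrightarrow> (\<forall>l<n. x l = 0))"

lemma eigenvalue_nonzero_if_trivial_kernel:
  assumes U: "eigenbasis n K U d" and j: "j < n"
    and K_inj: "trivial_kernel n K"
  shows "d j \<noteq> 0"
proof
  assume "d j = 0"
  then have "\<forall>i<n. (\<Sum>l<n. K i l * U l j) = 0" using U j unfolding eigenbasis_def by simp
  then have "\<forall>l<n. U l j = 0"
    using K_inj[unfolded trivial_kernel_def, THEN spec, of "\<lambda>l. U l j"] by blast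
  then have "(\<Sum>k<n. cnj (U k j) * U k j) = 0" by simp
  then show False using U j unfolding eigenbasis_def orthonormal_cols_def by simp
qed

lemma paired_eigenbasis:
  assumes K_herm: "hermitian_on (2 * N) K"
    and K_anti: "swap_antisymmetric (2 * N) (block_swap N) K"
    and K_inj: "trivial_kernel (2 * N) K"
  obtains E \<nu> where "orthonormal_cols (2 * N) E" "\<forall>a<N. \<nu> a > 0"
    "\<forall>i<2 * N. \<forall>a<2 * N. (\<Sum>l<2 * N. K i l * E l a)
        = of_real (if a < N then \<nu> a else - \<nu> (a - N)) * E i a"
    "\<forall>k<2 * N. \<forall>a<2 * N. E k a = cnj (E (block_swap N k) (block_swap N a))"
proof -
  define n where "n = 2 * N"
  define g where "g = block_swap N"
  have g: "index_involution n g" unfolding n_def g_def by (rule index_involution_block_swap)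
  obtain U d where U: "eigenbasis n K U d"
    using hermitian_eigenbasis_exists K_herm unfolding n_def by blast
  have U_orth: "(\<Sum>k<n. cnj (U k i) * U k j) = (if i = j then 1 else 0)" if "i < n" "j < n" for i j
    using U that unfolding eigenbasis_def orthonormal_cols_def by blast
  have U_eig: "(\<Sum>l<n. K i l * U l j) = of_real (d j) * U i j" if "i < n" "j < n" for i j
    using U that unfolding eigenbasis_def by blast
  define V where "V k j = cnj (U (g k) j)" for k j
  have V: "eigenbasis n K V (\<lambda>j. - d j)"
    unfolding V_def by (rule reflected_eigenbasis[OF g K_anti[folded n_def g_def] U])
  have V_orth: "(\<Sum>k<n. cnj (V k i) * V k j) = (if i = j then 1 else 0)" if "i < n" "j < n" for i j
    using V that unfolding eigenbasis_def orthonormal_cols_def by blast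
  have V_eig: "(\<Sum>l<n. K i l * V l j) = of_real (- d j) * V i j" if "i < n" "j < n" for i j
    using V that unfolding eigenbasis_def by blast
  define P where "P = {j. j < n \<and> d j > 0}"
  define Q where "Q = {j. j < n \<and> d j < 0}"
  have "d j \<noteq> 0" if "j < n" for j
    by (rule eigenvalue_nonzero_if_trivial_kernel[OF U that K_inj[folded n_def]])
  then have "P \<union> Q = {..<n}" unfolding P_def Q_def by (auto simp: neq_iff)
  moreover have "card (P \<union> Q) = card P + card Q"
    by (rule card_Un_disjoint) (auto simp: P_def Q_def)
  moreover have "card P = card Q"
    using card_pos_eigenvalues_eq_card_neg[OF g K_herm[folded n_def] K_anti[folded n_def g_def] U]
    unfolding P_def Q_def .
  ultimately have "card P = N" unfolding n_def by simp
  moreover have "finite P" unfolding P_def by simp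
  ultimately obtain \<pi> where \<pi>: "bij_betw \<pi> {0..<N} P"
    using ex_bij_betw_nat_finite by metis
  have \<pi>P: "\<pi> a < n" "d (\<pi> a) > 0" if "a < N" for a
    using \<pi> that unfolding bij_betw_def P_def by auto
  have \<pi>_inj: "\<pi> a = \<pi> b \<longleftrightarrow> a = b" if "a < N" "b < N" for a b
    using \<pi> that unfolding bij_betw_def inj_on_def by auto
  define E where "E k a = (if a < N then U k (\<pi> a) else V k (\<pi> (a - N)))" for k a
  have cross: "(\<Sum>k<n. cnj (U k (\<pi> a)) * V k (\<pi> b)) = 0" if "a < N" "b < N" for a b
    using eigenvectors_orthogonal[OF K_herm[folded n_def], of "\<lambda>k. U k (\<pi> a)" "d (\<pi> a)"
        "\<lambda>k. V k (\<pi> b)" "- d (\<pi> b)"] U_eig V_eig \<pi>P[OF that(1)] \<pi>P[OF that(2)]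
    by simp
  have "orthonormal_cols n E"
    unfolding orthonormal_cols_def
  proof (intro allI impI)
    fix a b assume ab: "a < n" "b < n"
    consider "a < N" "b < N" | "a < N" "\<not> b < N" | "\<not> a < N" "b < N" | "\<not> a < N" "\<not> b < N"
      by blast
    then show "(\<Sum>k<n. cnj (E k a) * E k b) = (if a = b then 1 else 0)"
    proof cases
      case 1
      then show ?thesis using U_orth[OF \<pi>P(1) \<pi>P(1)] \<pi>_inj unfolding E_def by simp
    next
      case 2
      then have "b - N < N" using ab unfolding n_def by simp
      then show ?thesis using cross[of a "b - N"] 2 unfolding E_def by simp
    next
      case 3
      then have "a - N < N" using ab unfolding n_def by simp
      have "(\<Sum>k<n. cnj (V k (\<pi> (a - N))) * U k (\<pi> b))
          = cnj (\<Sum>k<n. cnj (U k (\<pi> b)) * V k (\<pi> (a - N)))"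
        by (simp add: mult.commute)
      then show ?thesis using cross[OF \<open>b < N\<close> \<open>a - N < N\<close>] 3 unfolding E_def by auto
    next
      case 4
      then have "a - N < N" "b - N < N" using ab unfolding n_def by auto
      then show ?thesis using V_orth[OF \<pi>P(1) \<pi>P(1)] \<pi>_inj[of "a - N" "b - N"] 4
        unfolding E_def by auto
    qed
  qed
  moreover have "(\<Sum>l<n. K i l * E l a)
      = of_real (if a < N then d (\<pi> a) else - d (\<pi> (a - N))) * E i a"
    if "i < n" "a < n" for i a
  proof (cases "a < N")
    case True
    then show ?thesis using U_eig[OF that(1) \<pi>P(1)] unfolding E_def by simp
  next
    case False
    then have "a - N < N" using that unfolding n_def by simp
    then show ?thesis using V_eig[OF that(1) \<pi>P(1)] False unfolding E_def by simp
  qed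
  moreover have "E k a = cnj (E (g k) (g a))" if k: "k < n" and a: "a < n" for k a
  proof (cases "a < N")
    case True
    then have "g a = a + N" "\<not> g a < N" by (simp_all add: g_def block_swap_def)
    moreover have "g (g k) = k" using g k unfolding index_involution_def by blast
    ultimately show ?thesis using True unfolding E_def V_def by simp
  next
    case False
    then have "g a = a - N" "g a < N" using a by (simp_all add: g_def block_swap_def n_def)
    then show ?thesis using False unfolding E_def V_def by simp
  qed
  ultimately show ?thesis using that[of E "\<lambda>a. d (\<pi> a)"] \<pi>P unfolding n_def g_def by blast
qed

lemma simultaneous_normal_form:
  fixes R :: "nat \<Rightarrow> nat \<Rightarrow> complex" and \<omega> :: "nat \<Rightarrow> real"
  assumes R_herm: "hermitian_on (2 * N) R"
    and R_anti: "swap_antisymmetric (2 * N) (block_swap N) R"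
    and R_inj: "trivial_kernel (2 * N) R"
    and \<omega>_pos: "\<forall>i<2 * N. \<omega> i > 0"
    and \<omega>_swap: "\<forall>i<2 * N. \<omega> (block_swap N i) = \<omega> i"
  obtains T \<mu> where "\<forall>a<N. \<mu> a > 0"
    "\<forall>a<2 * N. \<forall>b<2 * N. (\<Sum>k<2 * N. \<Sum>l<2 * N. cnj (T k a) * R k l * T l b)
        = (if a = b then (if a < N then 1 else -1) else 0)"
    "\<forall>a<2 * N. \<forall>b<2 * N. T a b = cnj (T (block_swap N a) (block_swap N b))"
    "\<forall>a<2 * N. \<forall>b<2 * N. (\<Sum>k<2 * N. cnj (T k a) * of_real (\<omega> k) * T k b)
        = (if a = b then of_real (\<mu> (if a < N then a else a - N)) else 0)"
proof -
  define n where "n = 2 * N"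
  define g where "g = block_swap N"
  \<comment> \<open>Normalising \<open>\<omega>\<close> to the identity reduces the problem to the Hermitian matrix \<open>K\<close>.\<close>
  define s where "s i = sqrt (\<omega> i)" for i
  define K where "K i j = R i j / of_real (s i * s j)" for i j
  have s_pos: "s i > 0" and s_sq: "s i * s i = \<omega> i" if "i < n" for i
    using \<omega>_pos that unfolding s_def n_def by auto
  have R_K: "R i j = K i j * of_real (s i * s j)" if "i < n" "j < n" for i j
    unfolding K_def using s_pos[OF that(1)] s_pos[OF that(2)] by simp
  have K_herm: "hermitian_on n K"
    using R_herm unfolding hermitian_on_def K_def n_def
    by (simp add: complex_cnj_divide mult.commute)
  have K_anti: "swap_antisymmetric n g K"
    using R_anti \<omega>_swap unfolding swap_antisymmetric_def K_def s_def g_def n_def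
    by (simp add: complex_cnj_divide)
  have K_inj: "trivial_kernel n K"
    unfolding trivial_kernel_def
  proof (rule allI, rule impI)
    fix x assume Kx: "\<forall>i<n. (\<Sum>l<n. K i l * x l) = 0"
    have "(\<Sum>l<n. R i l * (x l / of_real (s l))) = of_real (s i) * (\<Sum>l<n. K i l * x l)"
      if "i < n" for i
    proof -
      have "R i l * (x l / of_real (s l)) = of_real (s i) * (K i l * x l)" if "l < n" for l
        using s_pos[OF that] unfolding R_K[OF \<open>i < n\<close> that] by simp
      then show ?thesis by (simp add: sum_distrib_left)
    qed
    then have "\<forall>l<n. x l / of_real (s l) = 0"
      using Kx R_inj[unfolded trivial_kernel_def, THEN spec, of "\<lambda>l. x l / of_real (s l)"]
      unfolding n_def by simp
    then show "\<forall>l<n. x l = 0" using s_pos by (simp add: less_imp_neq[symmetric])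
  qed
  obtain E \<nu> where E_orth: "orthonormal_cols n E" and \<nu>_pos: "\<forall>a<N. \<nu> a > 0"
    and E_eig: "\<forall>i<n. \<forall>a<n. (\<Sum>l<n. K i l * E l a)
        = of_real (if a < N then \<nu> a else - \<nu> (a - N)) * E i a"
    and E_swap: "\<forall>k<n. \<forall>a<n. E k a = cnj (E (g k) (g a))"
    using paired_eigenbasis[OF K_herm[unfolded n_def] K_anti[unfolded n_def g_def]
        K_inj[unfolded n_def]]
    unfolding n_def g_def by blast
  define c where "c a = sqrt (\<nu> (if a < N then a else a - N))" for a
  have \<nu>_pos': "\<nu> (if a < N then a else a - N) > 0" if "a < n" for a
    using \<nu>_pos that unfolding n_def by auto
  have c_pos: "c a > 0" and c_sq: "c a * c a = \<nu> (if a < N then a else a - N)" if "a < n" for a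
    using \<nu>_pos'[OF that] unfolding c_def by auto
  define T where "T k a = E k a / of_real (s k * c a)" for k a
  have "(\<Sum>k<n. \<Sum>l<n. cnj (T k a) * R k l * T l b)
      = (if a = b then (if a < N then 1 else -1) else 0)"
    if a: "a < n" and b: "b < n" for a b
  proof -
    have "cnj (T k a) * R k l * T l b = cnj (E k a) * (K k l * E l b) / of_real (c a * c b)"
      if "k < n" "l < n" for k l
      using s_pos[OF that(1)] s_pos[OF that(2)] c_pos[OF a] c_pos[OF b]
      unfolding T_def R_K[OF that] by (simp add: complex_cnj_divide field_simps)
    then have "(\<Sum>k<n. \<Sum>l<n. cnj (T k a) * R k l * T l b)
        = (\<Sum>k<n. cnj (E k a) * (\<Sum>l<n. K k l * E l b)) / of_real (c a * c b)"
      by (simp add: sum_divide_distrib sum_distrib_left)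
    also have "\<dots> = of_real (if b < N then \<nu> b else - \<nu> (b - N)) * (\<Sum>k<n. cnj (E k a) * E k b)
        / of_real (c a * c b)"
      using E_eig b by (simp add: sum_distrib_left ac_simps)
    finally show ?thesis
      using E_orth a b arg_cong[OF c_sq[OF b], of complex_of_real] \<nu>_pos'[OF b]
      unfolding orthonormal_cols_def by (cases "b < N") auto
  qed
  moreover have "T a b = cnj (T (g a) (g b))" if "a < n" "b < n" for a b
  proof -
    have "s (g a) = s a" "c (g b) = c b"
      using \<omega>_swap that unfolding s_def c_def g_def block_swap_def n_def by auto
    then show ?thesis using E_swap that unfolding T_def by (simp add: complex_cnj_divide)
  qed
  moreover have "(\<Sum>k<n. cnj (T k a) * of_real (\<omega> k) * T k b)
      = (if a = b then of_real (1 / \<nu> (if a < N then a else a - N)) else 0)"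
    if a: "a < n" and b: "b < n" for a b
  proof -
    have "cnj (T k a) * of_real (\<omega> k) * T k b = cnj (E k a) * E k b / of_real (c a * c b)"
      if "k < n" for k
      using s_pos[OF that] c_pos[OF a] c_pos[OF b]
      unfolding T_def s_sq[OF that, symmetric] by (simp add: complex_cnj_divide field_simps)
    then have "(\<Sum>k<n. cnj (T k a) * of_real (\<omega> k) * T k b)
        = (\<Sum>k<n. cnj (E k a) * E k b) / of_real (c a * c b)"
      by (simp add: sum_divide_distrib)
    then show ?thesis
      using E_orth a b arg_cong[OF c_sq[OF b], of complex_of_real]
      unfolding orthonormal_cols_def by auto
  qed
  moreover have "\<forall>a<N. 1 / \<nu> a > 0" using \<nu>_pos by simp
  ultimately show ?thesis
    using that[of "\<lambda>a. 1 / \<nu> a" T] unfolding n_def g_def by blast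
qed

lemma mat_mult_entry:
  fixes A B :: "'a :: comm_semiring_0 mat"
  assumes "A \<in> carrier_mat m k" "B \<in> carrier_mat k p" "i < m" "j < p"
  shows "(A * B) $$ (i, j) = (\<Sum>l<k. A $$ (i, l) * B $$ (l, j))"
  using assms by (simp add: scalar_prod_def atLeast0LessThan)

(* Defs.adj_mat is the conjugate transpose; the unqualified adj_mat of the imported
   Determinant theory is the adjugate. *)
lemma adj_mat_mult_mult_entry:
  assumes A: "A \<in> carrier_mat n n" and a: "a < n" and b: "b < n"
  shows "(Defs.adj_mat (mat n n (\<lambda>(i, j). T i j)) * A * mat n n (\<lambda>(i, j). T i j)) $$ (a, b)
    = (\<Sum>k<n. \<Sum>l<n. cnj (T k a) * A $$ (k, l) * T l b)"
proof -
  define TM where "TM = mat n n (\<lambda>(i, j). T i j)"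
  define X where "X = Defs.adj_mat TM"
  have TM: "TM \<in> carrier_mat n n" and X: "X \<in> carrier_mat n n"
    unfolding X_def TM_def Defs.adj_mat_def by auto
  have "(X * A) $$ (a, l) = (\<Sum>k<n. cnj (T k a) * A $$ (k, l))" if "l < n" for l
    using mat_mult_entry[OF X A a that] a unfolding X_def TM_def Defs.adj_mat_def by simp
  then have "(X * A * TM) $$ (a, b) = (\<Sum>l<n. (\<Sum>k<n. cnj (T k a) * A $$ (k, l)) * T l b)"
    using mat_mult_entry[OF mult_carrier_mat[OF X A] TM a b] b unfolding TM_def by simp
  then show ?thesis unfolding X_def TM_def
    by (simp add: sum_mult_sum_assoc[symmetric] sum_distrib_left mult.assoc)
qed

lemma invertible_mat_trivial_kernel:
  fixes A :: "'a :: comm_ring_1 mat"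
  assumes "invertible_mat A" "A \<in> carrier_mat n n"
  shows "trivial_kernel n (\<lambda>i j. A $$ (i, j))"
  unfolding trivial_kernel_def
proof (rule allI, rule impI)
  fix x :: "nat \<Rightarrow> 'a" assume Ax: "\<forall>i<n. (\<Sum>l<n. A $$ (i, l) * x l) = 0"
  obtain B where AB: "A * B = 1\<^sub>m n" and BA': "B * A = 1\<^sub>m (dim_row B)"
    using assms unfolding invertible_mat_def inverts_mat_def by auto
  have B: "B \<in> carrier_mat n n"
    using arg_cong[OF AB, of dim_col] arg_cong[OF BA', of dim_col] assms(2) by auto
  then have BA: "B * A = 1\<^sub>m n" using BA' by simp
  show "\<forall>l<n. x l = 0"
  proof (intro allI impI)
    fix l assume l: "l < n"
    have "x l = (\<Sum>m<n. (B * A) $$ (l, m) * x m)"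
      using l unfolding BA by (simp add: sum_kronecker_left)
    also have "\<dots> = (\<Sum>m<n. (\<Sum>i<n. B $$ (l, i) * A $$ (i, m)) * x m)"
      by (intro sum.cong refl) (simp add: mat_mult_entry[OF B assms(2) l])
    also have "\<dots> = (\<Sum>i<n. B $$ (l, i) * (\<Sum>m<n. A $$ (i, m) * x m))"
      by (rule sum_mult_sum_assoc[symmetric])
    finally show "x l = 0" using Ax by simp
  qed
qed

lemma inv_mat_right:
  assumes "invertible_mat A" "A \<in> carrier_mat n n"
  shows "inv_mat A \<in> carrier_mat n n" "A * inv_mat A = 1\<^sub>m n"
proof -
  obtain B where AB: "A * B = 1\<^sub>m n" and BA: "B * A = 1\<^sub>m (dim_row B)"
    using assms unfolding invertible_mat_def inverts_mat_def by auto
  have "B \<in> carrier_mat n n"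
    using arg_cong[OF AB, of dim_col] arg_cong[OF BA, of dim_col] assms(2) by auto
  then have "\<exists>B. B \<in> carrier_mat (dim_row A) (dim_row A) \<and> A * B = 1\<^sub>m (dim_row A)
      \<and> B * A = 1\<^sub>m (dim_row A)"
    using AB BA assms(2) by auto
  from someI_ex[OF this] show "inv_mat A \<in> carrier_mat n n" "A * inv_mat A = 1\<^sub>m n"
    using assms(2) unfolding inv_mat_def by auto
qed

lemma inv_mat_cancel:
  assumes R: "invertible_mat R" "R \<in> carrier_mat n n"
    and carrier: "S \<in> carrier_mat n n" "X \<in> carrier_mat n n" "B \<in> carrier_mat n n"
      "T \<in> carrier_mat n n"
  shows "S * X * R * (inv_mat R * B) * T = S * (X * B * T)"
proof -
  obtain I: "inv_mat R \<in> carrier_mat n n" and RI: "R * inv_mat R = 1\<^sub>m n"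
    using inv_mat_right[OF R] by blast
  have SX: "S * X \<in> carrier_mat n n" and SXR: "S * X * R \<in> carrier_mat n n"
    and BT: "B * T \<in> carrier_mat n n" and IBT: "inv_mat R * (B * T) \<in> carrier_mat n n"
    using carrier R(2) I by auto
  have "S * X * R * (inv_mat R * B) * T = S * X * R * (inv_mat R * (B * T))"
    using assoc_mult_mat[OF SXR mult_carrier_mat[OF I carrier(3)] carrier(4)]
      assoc_mult_mat[OF I carrier(3,4)] by simp
  also have "\<dots> = S * X * (R * inv_mat R * (B * T))"
    using assoc_mult_mat[OF SX R(2) IBT] assoc_mult_mat[OF R(2) I BT] by simp
  also have "\<dots> = S * (X * B * T)"
    unfolding RI left_mult_one_mat[OF BT]
    using assoc_mult_mat[OF carrier(1,2) BT] assoc_mult_mat[OF carrier(2-4)] by simp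
  finally show ?thesis .
qed

lemma pos_def_mat_diag_pos:
  assumes "pos_def_mat A" "i < dim_row A"
  shows "A $$ (i, i) > 0"
proof -
  define n where "n = dim_row A"
  have A: "A \<in> carrier_mat n n" using assms(1) unfolding pos_def_mat_def n_def by auto
  have i: "i < n" using assms(2) unfolding n_def .
  define x where "x = (unit_vec n i :: real vec)"
  have "x \<noteq> 0\<^sub>v n"
    using i unfolding x_def by (metis index_unit_vec(1) index_zero_vec(1) zero_neq_one)
  then have "x \<bullet> (A *\<^sub>v x) > 0" using assms(1) unfolding pos_def_mat_def x_def n_def by auto
  moreover have "x \<bullet> (A *\<^sub>v x) = A $$ (i, i)"
    using A i unfolding x_def by simp
  ultimately show ?thesis by simp
qed

lemma Gamma_mat_carrier: "Gamma_mat N \<in> carrier_mat (2 * N) (2 * N)"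
  and Sigma_mat_carrier: "Sigma_mat N \<in> carrier_mat (2 * N) (2 * N)"
  and R_mat_carrier: "R_mat N v L Ls M c \<in> carrier_mat (2 * N) (2 * N)"
  and Omega_real_carrier: "Omega_real N v L Ls M c \<in> carrier_mat (2 * N) (2 * N)"
  and Omega_mat_carrier: "Omega_mat N v L Ls M c \<in> carrier_mat (2 * N) (2 * N)"
  unfolding Gamma_mat_def Sigma_mat_def R_mat_def Let_def sigma_mat_def Omega_mat_def
    Omega_real_def rho_mat_def xi_mat_def mat_diag_def by auto

lemma sigma_mat_skew:
  assumes "a < N" "b < N"
  shows sigma_mat_antisym: "sigma_mat N v L Ls M c $$ (b, a) = - sigma_mat N v L Ls M c $$ (a, b)"
    and sigma_mat_imaginary:
      "cnj (sigma_mat N v L Ls M c $$ (a, b)) = - sigma_mat N v L Ls M c $$ (a, b)"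
proof -
  define X where "X a b = v * sqrt (real ((a + 1) * (b + 1))) * (1 - (-1) ^ ((a + 1) + (b + 1)))"
    for a b :: nat
  define Y where "Y a b = pi * sqrt (uu v L Ls M c (a + 1) * uu v L Ls M c (b + 1))
      * (real ((b + 1) ^ 2) - real ((a + 1) ^ 2))" for a b :: nat
  have XY: "X b a = X a b" "Y b a = - Y a b"
    unfolding X_def Y_def by (simp add: ac_simps, simp add: algebra_simps)
  have entry: "sigma_mat N v L Ls M c $$ (i, j)
      = (if i = j then 0 else 2 * \<i> * of_real (X i j) / of_real (Y i j))" if "i < N" "j < N" for i j
    using that unfolding sigma_mat_def X_def Y_def Let_def by simp
  show "sigma_mat N v L Ls M c $$ (b, a) = - sigma_mat N v L Ls M c $$ (a, b)"
    using XY unfolding entry[OF assms] entry[OF assms(2,1)] by simp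
  show "cnj (sigma_mat N v L Ls M c $$ (a, b)) = - sigma_mat N v L Ls M c $$ (a, b)"
    unfolding entry[OF assms] by (simp add: complex_cnj_divide)
qed

lemma R_mat_entry:
  assumes "i < 2 * N" "j < 2 * N"
  shows "R_mat N v L Ls M c $$ (i, j) = (if i = j then (if i < N then 1 else -1) else 0)
     - sigma_mat N v L Ls M c $$ (if i < N then i else i - N, if j < N then j else j - N)"
  using assms unfolding R_mat_def Let_def Sigma_mat_def by (auto simp: sigma_mat_def)

lemma R_mat_hermitian: "hermitian_on (2 * N) (\<lambda>i j. R_mat N v L Ls M c $$ (i, j))"
  unfolding hermitian_on_def
proof (intro allI impI)
  fix i j assume ij: "i < 2 * N" "j < 2 * N"
  define p where "p = (if i < N then i else i - N)"
  define q where "q = (if j < N then j else j - N)"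
  have pq: "p < N" "q < N" using ij unfolding p_def q_def by auto
  show "cnj (R_mat N v L Ls M c $$ (i, j)) = R_mat N v L Ls M c $$ (j, i)"
    unfolding R_mat_entry[OF ij] R_mat_entry[OF ij(2,1)] p_def[symmetric] q_def[symmetric]
      sigma_mat_antisym[OF pq]
    using sigma_mat_imaginary[OF pq] by simp
qed

lemma R_mat_swap_antisymmetric:
  "swap_antisymmetric (2 * N) (block_swap N) (\<lambda>i j. R_mat N v L Ls M c $$ (i, j))"
  unfolding swap_antisymmetric_def
proof (intro allI impI)
  fix i j assume ij: "i < 2 * N" "j < 2 * N"
  have "block_swap N i = block_swap N j \<longleftrightarrow> i = j"
    using index_involution_block_swap[of N] ij unfolding index_involution_def by metis
  moreover have "(if i < N then i else i - N) < N" "(if j < N then j else j - N) < N"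
    using ij by auto
  ultimately show "cnj (R_mat N v L Ls M c $$ (block_swap N i, block_swap N j))
      = - R_mat N v L Ls M c $$ (i, j)"
    unfolding R_mat_entry[OF block_swap_less[OF ij(1)] block_swap_less[OF ij(2)]]
      R_mat_entry[OF ij] block_index_block_swap[OF ij(1)] block_index_block_swap[OF ij(2)]
    unfolding block_swap_less_iff[OF ij(1)] block_swap_less_iff[OF ij(2)]
    using sigma_mat_imaginary by simp
qed

lemma Omega_real_entry:
  assumes "i < 2 * N" "j < 2 * N"
  shows "Omega_real N v L Ls M c $$ (i, j) =
    (let k = (if i < N then i else i - N);
         r = real (k + 1) * uu v L Ls M c (k + 1) * epsn v L Ls M c (k + 1);
         x = - (real (k + 1) * uu v L Ls M c (k + 1) * (1 - epsn v L Ls M c (k + 1)))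
     in if i = j then r else if j = block_swap N i then x else 0)"
  using assms unfolding Omega_real_def Let_def block_swap_def
  by (auto simp: rho_mat_def xi_mat_def mat_diag_def)

lemma Omega_real_diagonal:
  assumes "pos_def_mat (Omega_real N v L Ls M c)" "i < 2 * N" "j < 2 * N"
  shows "Omega_real N v L Ls M c $$ (i, j)
    = (if i = j then Omega_real N v L Ls M c $$ (i, i) else 0)"
proof -
  define k where "k = (if i < N then i else i - N)"
  have "Omega_real N v L Ls M c $$ (i, i) > 0"
    using pos_def_mat_diag_pos[OF assms(1)] carrier_matD(1)[OF Omega_real_carrier] assms(2) by simp
  \<comment> \<open>A positive diagonal entry forces \<open>\<epsilon> = 1\<close>, which kills the off-diagonal block \<open>\<xi>\<close>.\<close>
  then have "epsn v L Ls M c (k + 1) = 1"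
    using Omega_real_entry[OF assms(2,2)] unfolding k_def Let_def epsn_def
    by (auto split: if_splits)
  then show ?thesis
    using Omega_real_entry[OF assms(2,3)] Omega_real_entry[OF assms(2,2)]
    unfolding k_def Let_def by auto
qed

lemma Omega_real_diag_block_swap:
  assumes "i < 2 * N"
  shows "Omega_real N v L Ls M c $$ (block_swap N i, block_swap N i)
    = Omega_real N v L Ls M c $$ (i, i)"
  using Omega_real_entry[OF assms assms]
    Omega_real_entry[OF block_swap_less[OF assms] block_swap_less[OF assms]]
  unfolding Let_def block_index_block_swap[OF assms] by simp

lemma Gamma_mat_entry:
  assumes "i < 2 * N" "j < 2 * N"
  shows "Gamma_mat N $$ (i, j) = (if block_swap N i = j then 1 else 0)"
  using assms unfolding Gamma_mat_def block_swap_def by auto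

lemma Sigma_mat_entry:
  assumes "i < 2 * N" "j < 2 * N"
  shows "Sigma_mat N $$ (i, j) = (if i = j then (if i < N then 1 else -1) else 0)"
  using assms unfolding Sigma_mat_def by auto

lemma Gamma_conj_Gamma_entry:
  assumes X: "X \<in> carrier_mat (2 * N) (2 * N)" and i: "i < 2 * N" and j: "j < 2 * N"
  shows "(Gamma_mat N * conj_mat X * Gamma_mat N) $$ (i, j)
    = cnj (X $$ (block_swap N i, block_swap N j))"
proof -
  have CX: "conj_mat X \<in> carrier_mat (2 * N) (2 * N)" using X unfolding conj_mat_def by simp
  have gi: "block_swap N i < 2 * N" and gj: "block_swap N j < 2 * N"
    using i j by (simp_all add: block_swap_less)
  have "(Gamma_mat N * conj_mat X) $$ (i, l) = cnj (X $$ (block_swap N i, l))"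
    if l: "l < 2 * N" for l
    using mat_mult_entry[OF Gamma_mat_carrier CX i l] X l
    by (simp add: Gamma_mat_entry[OF i] sum_kronecker_left[OF gi] conj_mat_def)
  moreover have "block_swap N l = j \<longleftrightarrow> l = block_swap N j" if "l < 2 * N" for l
    using index_involution_block_swap[of N] that j unfolding index_involution_def by metis
  ultimately show ?thesis
    using mat_mult_entry[OF mult_carrier_mat[OF Gamma_mat_carrier CX] Gamma_mat_carrier i j]
    by (simp add: Gamma_mat_entry[OF _ j] sum_kronecker_right[OF gj] cong: if_cong)
qed

lemma Sigma_mat_mult_entry:
  assumes Y: "Y \<in> carrier_mat (2 * N) (2 * N)" and a: "a < 2 * N" and b: "b < 2 * N"
  shows "(Sigma_mat N * Y) $$ (a, b) = (if a < N then 1 else -1) * Y $$ (a, b)"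
  using mat_mult_entry[OF Sigma_mat_carrier Y a b] a
  by (simp add: Sigma_mat_entry[OF a] if_distrib[of "\<lambda>x. x * _"] cong: if_cong)

lemma normal_mode_transformationI:
  fixes T :: "nat \<Rightarrow> nat \<Rightarrow> complex" and \<omega> \<mu> :: "nat \<Rightarrow> real"
  assumes R_inv: "invertible_mat (R_mat N v L Ls M c)"
    and \<Omega>: "\<forall>i<2 * N. \<forall>j<2 * N. Omega_real N v L Ls M c $$ (i, j) = (if i = j then \<omega> i else 0)"
    and \<mu>_pos: "\<forall>a<N. \<mu> a > 0"
    and T_R: "\<forall>a<2 * N. \<forall>b<2 * N.
        (\<Sum>k<2 * N. \<Sum>l<2 * N. cnj (T k a) * R_mat N v L Ls M c $$ (k, l) * T l b)
        = (if a = b then (if a < N then 1 else -1) else 0)"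
    and T_swap: "\<forall>a<2 * N. \<forall>b<2 * N. T a b = cnj (T (block_swap N a) (block_swap N b))"
    and T_\<Omega>: "\<forall>a<2 * N. \<forall>b<2 * N. (\<Sum>k<2 * N. cnj (T k a) * of_real (\<omega> k) * T k b)
        = (if a = b then of_real (\<mu> (if a < N then a else a - N)) else 0)"
  shows "normal_mode_transformation N v L Ls M c (mat (2 * N) (2 * N) (\<lambda>(i, j). T i j))"
proof -
  define n where "n = 2 * N"
  define TM where "TM = mat n n (\<lambda>(i, j). T i j)"
  define \<Lambda> where
    "\<Lambda> = mat_diag n (\<lambda>j. if j < N then complex_of_real (\<mu> j)
      else complex_of_real (- \<mu> (j - N)))"
  define \<Delta> :: "complex mat" where
    "\<Delta> = mat_diag n (\<lambda>j. of_real (\<mu> (if j < N then j else j - N)))"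
  have \<Delta>: "\<Delta> \<in> carrier_mat n n" unfolding \<Delta>_def by (simp add: mat_diag_def)
  note carriers = R_mat_carrier[of N v L Ls M c, folded n_def]
    Omega_mat_carrier[of N v L Ls M c, folded n_def]
    Sigma_mat_carrier[of N, folded n_def] Gamma_mat_carrier[of N, folded n_def]
  have TM: "TM \<in> carrier_mat n n" and TH: "Defs.adj_mat TM \<in> carrier_mat n n"
    and CT: "conj_mat TM \<in> carrier_mat n n"
    unfolding TM_def Defs.adj_mat_def conj_mat_def by auto
  have symplectic: "Defs.adj_mat TM * R_mat N v L Ls M c * TM = Sigma_mat N"
  proof (rule eq_matI)
    fix a b assume "a < dim_row (Sigma_mat N)" "b < dim_col (Sigma_mat N)"
    then have ab: "a < n" "b < n" using carriers by auto
    show "(Defs.adj_mat TM * R_mat N v L Ls M c * TM) $$ (a, b) = Sigma_mat N $$ (a, b)"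
      unfolding TM_def adj_mat_mult_mult_entry[OF carriers(1) ab]
      using T_R ab Sigma_mat_entry[of a N b] unfolding n_def by simp
  qed (use TM TH carriers in auto)
  have reality: "TM = Gamma_mat N * conj_mat TM * Gamma_mat N"
  proof (rule eq_matI)
    fix a b assume "a < dim_row (Gamma_mat N * conj_mat TM * Gamma_mat N)"
      "b < dim_col (Gamma_mat N * conj_mat TM * Gamma_mat N)"
    then have ab: "a < n" "b < n" using carriers by auto
    have "block_swap N a < n" "block_swap N b < n" using ab block_swap_less unfolding n_def by auto
    then show "TM $$ (a, b) = (Gamma_mat N * conj_mat TM * Gamma_mat N) $$ (a, b)"
      unfolding Gamma_conj_Gamma_entry[OF TM[unfolded n_def] ab[unfolded n_def]]
      using T_swap ab unfolding TM_def n_def by simp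
  qed (use TM CT carriers in auto)
  have diagonal: "Defs.adj_mat TM * Omega_mat N v L Ls M c * TM = \<Delta>"
  proof (rule eq_matI)
    fix a b assume "a < dim_row \<Delta>" "b < dim_col \<Delta>"
    then have ab: "a < n" "b < n" using \<Delta> by auto
    have "(\<Sum>l<n. cnj (T k a) * Omega_mat N v L Ls M c $$ (k, l) * T l b)
        = cnj (T k a) * of_real (\<omega> k) * T k b"
      if "k < n" for k
    proof -
      have "Omega_mat N v L Ls M c $$ (k, l) = (if k = l then of_real (\<omega> k) else 0)"
        if "l < n" for l
        using carriers(2) \<Omega> \<open>k < n\<close> that unfolding Omega_mat_def n_def by auto
      then have "(\<Sum>l<n. cnj (T k a) * Omega_mat N v L Ls M c $$ (k, l) * T l b)
          = (\<Sum>l<n. if l = k then cnj (T k a) * of_real (\<omega> k) * T k b else 0)"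
        by (intro sum.cong) auto
      then show ?thesis using \<open>k < n\<close> by simp
    qed
    then show "(Defs.adj_mat TM * Omega_mat N v L Ls M c * TM) $$ (a, b)
        = \<Delta> $$ (a, b)"
      unfolding TM_def adj_mat_mult_mult_entry[OF carriers(2) ab]
      using T_\<Omega> ab unfolding \<Delta>_def n_def by (simp add: mat_diag_def)
  qed (use TM TH \<Delta> carriers in auto)
  have "Sigma_mat N * Defs.adj_mat TM * R_mat N v L Ls M c * D_mat N v L Ls M c * TM
      = Sigma_mat N * \<Delta>"
    unfolding D_mat_def diagonal[symmetric]
    by (rule inv_mat_cancel[OF R_inv carriers(1,3) TH carriers(2) TM])
  also have "\<dots> = \<Lambda>"
  proof (rule eq_matI)
    fix a b assume "a < dim_row \<Lambda>" "b < dim_col \<Lambda>"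
    then have ab: "a < n" "b < n" unfolding \<Lambda>_def by (auto simp: mat_diag_def)
    from Sigma_mat_mult_entry[OF \<Delta>[unfolded n_def] ab[unfolded n_def]]
    show "(Sigma_mat N * \<Delta>) $$ (a, b) = \<Lambda> $$ (a, b)"
      using ab unfolding \<Lambda>_def \<Delta>_def n_def by (simp add: mat_diag_def)
  qed (use carriers \<Delta> in \<open>auto simp: \<Lambda>_def mat_diag_def\<close>)
  finally show ?thesis
    using TM \<mu>_pos symplectic reality
    unfolding normal_mode_transformation_def TM_def \<Lambda>_def n_def by blast
qed

theorem lemma4:
  fixes N M :: nat and v L Ls :: real and c :: "nat \<Rightarrow> real"
  assumes "N \<ge> 1" and "\<bar>v\<bar> < 1" and "L > 0" and "Ls \<ge> 0" and "M \<ge> 1" and "c 1 = 1"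
    and "\<forall>n \<in> {1..N}. (Ffun M c Ls (kk L n))\<^sup>2 \<noteq> v\<^sup>2 * (kk L n)\<^sup>2"
    and "invertible_mat (R_mat N v L Ls M c)"
    and "pos_def_mat (Omega_real N v L Ls M c)"
  shows "\<exists>T. normal_mode_transformation N v L Ls M c T"
proof -
  define \<omega> where "\<omega> i = Omega_real N v L Ls M c $$ (i, i)" for i
  have \<omega>_pos: "\<forall>i<2 * N. \<omega> i > 0"
    using pos_def_mat_diag_pos[OF assms(9)] carrier_matD(1)[OF Omega_real_carrier]
    unfolding \<omega>_def by simp
  have \<omega>_swap: "\<forall>i<2 * N. \<omega> (block_swap N i) = \<omega> i"
    using Omega_real_diag_block_swap unfolding \<omega>_def by blast
  have \<Omega>: "\<forall>i<2 * N. \<forall>j<2 * N. Omega_real N v L Ls M c $$ (i, j) = (if i = j then \<omega> i else 0)"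
    using Omega_real_diagonal[OF assms(9)] unfolding \<omega>_def by simp
  obtain T \<mu> where "\<forall>a<N. \<mu> a > 0"
    "\<forall>a<2 * N. \<forall>b<2 * N. (\<Sum>k<2 * N. \<Sum>l<2 * N. cnj (T k a) * R_mat N v L Ls M c $$ (k, l) * T l b)
        = (if a = b then (if a < N then 1 else -1) else 0)"
    "\<forall>a<2 * N. \<forall>b<2 * N. T a b = cnj (T (block_swap N a) (block_swap N b))"
    "\<forall>a<2 * N. \<forall>b<2 * N. (\<Sum>k<2 * N. cnj (T k a) * of_real (\<omega> k) * T k b)
        = (if a = b then of_real (\<mu> (if a < N then a else a - N)) else 0)"
    by (rule simultaneous_normal_form[OF R_mat_hermitian R_mat_swap_antisymmetric
        invertible_mat_trivial_kernel[OF assms(8) R_mat_carrier] \<omega>_pos \<omega>_swap])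
  then have "normal_mode_transformation N v L Ls M c (mat (2 * N) (2 * N) (\<lambda>(i, j). T i j))"
    by (rule normal_mode_transformationI[OF assms(8) \<Omega>])
  then show ?thesis by blast
qed

end
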